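(* For $\kappa>0$ let $\mathbb{P}_\kappa$ be the law of the Ornstein–Uhlenbeck process $B$ in $\mathbb{R}^\ell$ started at $0$ with generator $\frac12\Delta-\kappa x\cdot\nabla$. Then for every $N>0$, $$\limsup_{t\to\infty}\frac1t\log\mathbb{P}_\kappa\Big(\frac1t\int_0^t|B(s)|ds>N\Big)\le-N+\frac1{2\kappa^2}+\frac\ell2\kappa .$$
   Context: $|\cdot|$ is the Euclidean norm on $\mathbb{R}^\ell$. *)

theory Defs
  imports "HOL-Probability.Probability"
begin

text \<open>Covariance of each coordinate of the Ornstein-Uhlenbeck process started at 0
  with generator (1/2) Laplacian - kappa x . grad, i.e. dB = dW - kappa B dt.\<close>
definition OU_cov :: "real \<Rightarrow> real \<Rightarrow> real \<Rightarrow> real" where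
  "OU_cov \<kappa> s u = (exp (- \<kappa> * \<bar>s - u\<bar>) - exp (- \<kappa> * (s + u))) / (2 * \<kappa>)"

definition centered_gaussian_rv :: "'a measure \<Rightarrow> ('a \<Rightarrow> real) \<Rightarrow> real \<Rightarrow> bool" where
  "centered_gaussian_rv M X v \<longleftrightarrow>
     (v = 0 \<and> X \<in> borel_measurable M \<and> (AE \<omega> in M. X \<omega> = 0)) \<or>
     (v > 0 \<and> distributed M lborel X (normal_density 0 (sqrt v)))"

text \<open>B is (a version with continuous paths of) the Ornstein-Uhlenbeck process in
  R^CARD('n) started at 0: a centered Gaussian process with continuous paths,
  independent coordinates, and covariance OU_cov.\<close>
definition OU_process :: "'a measure \<Rightarrow> real \<Rightarrow> ('a \<Rightarrow> real \<Rightarrow> real ^ 'n) \<Rightarrow> bool" where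
  "OU_process M \<kappa> B \<longleftrightarrow>
     prob_space M \<and>
     (\<forall>\<omega>\<in>space M. continuous_on {0..} (B \<omega>)) \<and>
     (\<forall>(n::nat) (s::nat \<Rightarrow> real) (i::nat \<Rightarrow> 'n) (c::nat \<Rightarrow> real).
        (\<forall>k<n. s k \<ge> 0) \<longrightarrow>
        centered_gaussian_rv M (\<lambda>\<omega>. \<Sum>k<n. c k * (B \<omega> (s k) $ i k))
          (\<Sum>k<n. \<Sum>m<n. c k * c m * (if i k = i m then OU_cov \<kappa> (s k) (s m) else 0)))"

definition elog :: "real \<Rightarrow> ereal" where
  "elog p = (if p \<le> 0 then -\<infinity> else ereal (ln p))"

end

theory Submission
  imports Defs
begin

text \<open>
  By the exponential Chebyshev inequality it suffices to show
  \<open>E exp (\<integral>\<^sub>0\<^sup>t |B|) \<le> exp (t (1 / (4 a) + L b\<^sub>1))\<close>, \<open>L = CARD('n)\<close>, for all \<open>a, b, b\<^sub>1 > 0\<close> with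
  \<open>b < b\<^sub>1\<close> and \<open>a < 2 b (\<kappa> - b)\<close>; letting \<open>a \<rightarrow> \<kappa>\<^sup>2 / 2\<close> and \<open>b, b\<^sub>1 \<rightarrow> \<kappa> / 2\<close> gives the exponent.
  By Fatou's lemma the exponential moment is bounded by those of the right Riemann sums of mesh
  \<open>h\<close>, and \<open>|y| \<le> a |y|\<^sup>2 + 1 / (4 a)\<close> reduces these to \<open>E exp (a h \<Sum>\<^sub>k |B (k h)|\<^sup>2)\<close>.
  The Hubbard-Stratonovich identity \<open>E\<^sub>z exp (c z \<bullet> y) = exp (c\<^sup>2 |y|\<^sup>2 / 2)\<close>, for a standard
  Gaussian vector \<open>z\<close>, linearises this quadratic form, so that only the moment generating function
  of the Gaussian process \<open>B\<close> enters. On the grid its covariance form equals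
  \<open>(1 - \<rho>\<^sup>2) / (2 \<kappa>) \<Sum>\<^sub>r U\<^sub>r\<^sup>2\<close>, where \<open>\<rho> = exp (- \<kappa> h)\<close> and \<open>U\<^sub>r = \<rho> U\<^sub>r\<^sub>-\<^sub>1 + z\<^sub>r\<close> is an
  autoregressive sequence. Integrating out the \<open>z\<^sub>r\<close> one at a time, each Gaussian integral costs a
  factor \<open>(1 - 2 \<gamma>) powr (-1/2)\<close> and replaces the coefficient \<open>\<gamma>\<close> of the last square by
  \<open>\<beta> + \<rho>\<^sup>2 \<gamma> / (1 - 2 \<gamma>)\<close>. For \<open>a < 2 b (\<kappa> - b)\<close> and small \<open>h\<close> these coefficients stay below
  \<open>h b\<close>, so each of the \<open>t / h\<close> steps costs at most \<open>exp (h b\<^sub>1)\<close> per coordinate.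
\<close>

lemma one_minus_exp_neg_bounds:
  fixes y :: real
  assumes "y > 0"
  shows "y / (1 + y) \<le> 1 - exp (- y)" and "1 - exp (- y) \<le> y"
proof -
  have "exp (- y) \<le> 1 / (1 + y)"
    using assms exp_ge_add_one_self[of y] by (simp add: exp_minus field_simps)
  then show "y / (1 + y) \<le> 1 - exp (- y)"
    using assms by (simp add: field_simps)
  show "1 - exp (- y) \<le> y"
    using exp_ge_add_one_self[of "- y"] by simp
qed

lemma powr_minus_half_le_exp:
  fixes y :: real
  assumes "0 \<le> y" "y < 1"
  shows "(1 - y) powr (- 1 / 2) \<le> exp (y / (2 * (1 - y)))"
proof -
  have "ln (1 / (1 - y)) \<le> 1 / (1 - y) - 1"
    using assms by (intro ln_le_minus_one) auto
  then have "- ln (1 - y) / 2 \<le> y / (2 * (1 - y))"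
    using assms by (simp add: ln_div field_simps)
  then show ?thesis
    using assms by (simp add: powr_def)
qed

lemma abs_le_square_plus:
  fixes y a :: real
  assumes "a > 0"
  shows "\<bar>y\<bar> \<le> a * y\<^sup>2 + 1 / (4 * a)"
proof -
  have "4 * a * \<bar>y\<bar> \<le> 4 * a * (a * y\<^sup>2) + 1"
    using zero_le_power2[of "2 * a * \<bar>y\<bar> - 1"] by (simp add: power2_eq_square algebra_simps)
  then show ?thesis
    using assms by (simp add: field_simps)
qed

lemma power2_norm_vec_eq_sum: "(norm (x :: real ^ 'n))\<^sup>2 = (\<Sum>i\<in>UNIV. (x $ i)\<^sup>2)"
  unfolding power2_norm_eq_inner inner_vec_def by (simp add: power2_eq_square)

lemma elog_divide_le:
  assumes t: "t > 0" and p: "p \<le> exp (t * c)"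
  shows "elog p / ereal t \<le> ereal c"
proof (cases "p \<le> 0")
  case False
  then have "ln p \<le> ln (exp (t * c))"
    using p by (subst ln_le_cancel_iff) auto
  then have "ln p \<le> t * c"
    by simp
  then show ?thesis
    using False t by (simp add: elog_def pos_divide_le_eq mult.commute)
qed (use t in \<open>simp add: elog_def\<close>)

lemma eventually_at_right_0_mult_less:
  fixes K C :: real
  assumes "C > 0"
  shows "\<forall>\<^sub>F h in at_right 0. K * h < C"
proof -
  have "((\<lambda>h. K * h) \<longlongrightarrow> K * 0) (at_right 0)"
    by (intro tendsto_intros)
  then show ?thesis
    using order_tendstoD(2) assms by simp
qed

lemma filterlim_divide_real_of_nat_at_right_0:
  fixes t :: real
  assumes "t > 0"
  shows "filterlim (\<lambda>m. t / real m) (at_right 0) sequentially"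
  using assms by (intro tendsto_imp_filterlim_at_right lim_const_over_n)
    (auto intro: eventually_sequentiallyI[of 1])

lemma sum_block_diagonal_quadratic_form:
  fixes f :: "'i \<Rightarrow> 'k \<Rightarrow> real"
  assumes "finite I"
  shows "(\<Sum>j\<in>I \<times> J. \<Sum>j'\<in>I \<times> J. f (fst j) (snd j) * f (fst j') (snd j') *
      (if fst j = fst j' then K (snd j) (snd j') else 0))
    = (\<Sum>i\<in>I. \<Sum>k\<in>J. \<Sum>k'\<in>J. f i k * f i k' * K k k')"
proof -
  have "(\<Sum>j\<in>I \<times> J. \<Sum>j'\<in>I \<times> J. f (fst j) (snd j) * f (fst j') (snd j') *
        (if fst j = fst j' then K (snd j) (snd j') else 0))
      = (\<Sum>i\<in>I. \<Sum>k\<in>J. \<Sum>i'\<in>I. if i = i' then (\<Sum>k'\<in>J. f i k * f i' k' * K k k') else 0)"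
    unfolding sum.cartesian_product' by (intro sum.cong refl) auto
  then show ?thesis
    using assms by (simp add: sum.delta)
qed

section \<open>Riemann sums and Fatou's lemma\<close>

lemma integral_right_endpoint_error:
  fixes f :: "real \<Rightarrow> real"
  assumes ab: "a \<le> b" and f: "continuous_on {a..b} f" and \<epsilon>: "\<And>x. x \<in> {a..b} \<Longrightarrow> \<bar>f x - f b\<bar> \<le> \<epsilon>"
  shows "\<bar>integral {a..b} f - (b - a) * f b\<bar> \<le> \<epsilon> * (b - a)"
proof -
  have "integral {a..b} f - (b - a) * f b = integral {a..b} (\<lambda>x. f x - f b)"
    using ab f by (simp add: integral_diff integrable_continuous_interval)
  then show ?thesis
    using integral_bound[OF ab, of "\<lambda>x. f x - f b" \<epsilon>] f \<epsilon> by (simp add: continuous_on_diff)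
qed

lemma integral_uniform_partition:
  fixes f :: "real \<Rightarrow> real"
  assumes f: "continuous_on {0..real n * h} f" and h: "h \<ge> 0"
  shows "integral {0..real n * h} f = (\<Sum>j<n. integral {real j * h..real (Suc j) * h} f)"
  using f
proof (induction n)
  case (Suc n)
  have "real n * h \<le> real (Suc n) * h"
    using h by (simp add: mult_right_mono)
  then have "integral {0..real (Suc n) * h} f
      = integral {0..real n * h} f + integral {real n * h..real (Suc n) * h} f"
    using Henstock_Kurzweil_Integration.integral_combine[where a = 0 and c = "real n * h"
        and b = "real (Suc n) * h" and f = f] integrable_continuous_interval[OF Suc.prems] h
    by simp
  moreover have "continuous_on {0..real n * h} f"
    by (rule continuous_on_subset[OF Suc.prems]) (use \<open>real n * h \<le> real (Suc n) * h\<close> in auto)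
  ultimately show ?case
    using Suc.IH by simp
qed simp

lemma riemann_sum_right_error:
  fixes f :: "real \<Rightarrow> real"
  assumes f: "continuous_on {0..real m * h} f" and h: "h > 0"
    and modulus: "\<And>x y. x \<in> {0..real m * h} \<Longrightarrow> y \<in> {0..real m * h} \<Longrightarrow> \<bar>x - y\<bar> \<le> h \<Longrightarrow> \<bar>f x - f y\<bar> \<le> \<epsilon>"
  shows "\<bar>h * (\<Sum>j<m. f (real (Suc j) * h)) - integral {0..real m * h} f\<bar> \<le> \<epsilon> * (real m * h)"
proof -
  have cell: "\<bar>integral {real j * h..real (Suc j) * h} f - h * f (real (Suc j) * h)\<bar> \<le> \<epsilon> * h"
    if j: "j < m" for j
  proof -
    have "real (Suc j) * h \<le> real m * h"
      using j h by (intro mult_right_mono) auto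
    moreover have "0 \<le> real j * h"
      using h by simp
    ultimately have cell: "{real j * h..real (Suc j) * h} \<subseteq> {0..real m * h}"
      by auto
    have "\<bar>f x - f (real (Suc j) * h)\<bar> \<le> \<epsilon>" if x: "x \<in> {real j * h..real (Suc j) * h}" for x
      using modulus[of x "real (Suc j) * h"] subsetD[OF cell x] cell x by (auto simp: algebra_simps)
    then show ?thesis
      using integral_right_endpoint_error[of "real j * h" "real (Suc j) * h" f \<epsilon>] h
        continuous_on_subset[OF f cell] by (simp add: algebra_simps)
  qed
  have "\<bar>h * (\<Sum>j<m. f (real (Suc j) * h)) - integral {0..real m * h} f\<bar>
      = \<bar>\<Sum>j<m. integral {real j * h..real (Suc j) * h} f - h * f (real (Suc j) * h)\<bar>"
    using integral_uniform_partition[OF f] h by (simp add: sum_distrib_left sum_subtractf)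
  also have "\<dots> \<le> (\<Sum>j<m. \<epsilon> * h)"
    using cell by (intro order.trans[OF sum_abs sum_mono]) auto
  finally show ?thesis
    by (simp add: mult_ac)
qed

lemma riemann_sum_right_tendsto:
  fixes f :: "real \<Rightarrow> real"
  assumes f: "continuous_on {0..t} f" and t: "t > 0"
  shows "(\<lambda>m. t / real m * (\<Sum>j<m. f (real (Suc j) * (t / real m)))) \<longlonglongrightarrow> integral {0..t} f"
proof (rule LIMSEQ_I)
  fix r :: real
  assume r: "r > 0"
  define \<epsilon> where "\<epsilon> = r / (2 * t)"
  have \<epsilon>: "\<epsilon> > 0" "\<epsilon> * t < r"
    using r t by (simp_all add: \<epsilon>_def)
  obtain d where d: "d > 0"
    and close: "\<And>x y. x \<in> {0..t} \<Longrightarrow> y \<in> {0..t} \<Longrightarrow> dist y x < d \<Longrightarrow> dist (f y) (f x) < \<epsilon>"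
    using compact_uniformly_continuous[OF f compact_Icc] \<epsilon> unfolding uniformly_continuous_on_def by metis
  obtain N :: nat where N: "t / d < real N"
    using reals_Archimedean2 by blast
  show "\<exists>N. \<forall>m\<ge>N. norm (t / real m * (\<Sum>j<m. f (real (Suc j) * (t / real m))) - integral {0..t} f) < r"
  proof (intro exI allI impI)
    fix m assume m: "Suc N \<le> m"
    define h where "h = t / real m"
    have "t / d < real m"
      using m N by linarith
    then have h: "h > 0" "h < d" "real m * h = t"
      using m t d by (auto simp: h_def field_simps)
    have "\<bar>h * (\<Sum>j<m. f (real (Suc j) * h)) - integral {0..real m * h} f\<bar> \<le> \<epsilon> * (real m * h)"
      using f h close by (intro riemann_sum_right_error) (auto simp: dist_real_def less_imp_le)
    then show "norm (t / real m * (\<Sum>j<m. f (real (Suc j) * (t / real m))) - integral {0..t} f) < r"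
      using \<epsilon> h by (simp add: h_def[symmetric])
  qed
qed

lemma nn_integral_le_of_tendsto:
  fixes u :: "nat \<Rightarrow> 'a \<Rightarrow> ennreal"
  assumes u: "\<And>m. u m \<in> borel_measurable M"
    and lim: "\<And>\<omega>. \<omega> \<in> space M \<Longrightarrow> (\<lambda>m. u m \<omega>) \<longlonglongrightarrow> v \<omega>"
    and bound: "eventually (\<lambda>m. integral\<^sup>N M (u m) \<le> C) sequentially"
  shows "integral\<^sup>N M v \<le> C"
proof -
  have "integral\<^sup>N M v = (\<integral>\<^sup>+\<omega>. liminf (\<lambda>m. u m \<omega>) \<partial>M)"
    using lim by (intro nn_integral_cong lim_imp_Liminf[symmetric]) auto
  also have "\<dots> \<le> liminf (\<lambda>m. integral\<^sup>N M (u m))"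
    using u by (rule nn_integral_liminf)
  also have "\<dots> \<le> limsup (\<lambda>m. integral\<^sup>N M (u m))"
    by (rule Liminf_le_Limsup) simp
  also have "\<dots> \<le> C"
    using bound by (rule Limsup_bounded)
  finally show ?thesis .
qed

section \<open>Gaussian integrals\<close>

lemma nn_integral_lborel_exp_quadratic:
  fixes q b :: real
  assumes q: "q > 0"
  shows "(\<integral>\<^sup>+x. ennreal (exp (- q * x\<^sup>2 / 2 + b * x)) \<partial>lborel)
    = ennreal (sqrt (2 * pi / q) * exp (b\<^sup>2 / (2 * q)))"
proof -
  define \<sigma> where "\<sigma> = 1 / sqrt q"
  have \<sigma>: "\<sigma> > 0" "\<sigma>\<^sup>2 = 1 / q"
    using q by (simp_all add: \<sigma>_def power_divide)
  have complete_square: "exp (- q * x\<^sup>2 / 2 + b * x)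
      = sqrt (2 * pi / q) * exp (b\<^sup>2 / (2 * q)) * normal_density (b / q) \<sigma> x" for x
  proof -
    have density: "normal_density (b / q) \<sigma> x
        = 1 / sqrt (2 * pi / q) * exp (- (x - b / q)\<^sup>2 / (2 * (1 / q)))"
      by (simp add: normal_density_def \<sigma>)
    have exponent: "- q * x\<^sup>2 / 2 + b * x = b\<^sup>2 / (2 * q) + (- (x - b / q)\<^sup>2 / (2 * (1 / q)))"
      using q by (simp add: field_simps power2_eq_square)
    show ?thesis
      unfolding density exponent exp_add using q by simp
  qed
  have "(\<integral>\<^sup>+x. ennreal (exp (- q * x\<^sup>2 / 2 + b * x)) \<partial>lborel)
      = ennreal (sqrt (2 * pi / q) * exp (b\<^sup>2 / (2 * q)))
        * (\<integral>\<^sup>+x. ennreal (normal_density (b / q) \<sigma> x) \<partial>lborel)"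
    unfolding complete_square using q by (subst nn_integral_cmult[symmetric]) (auto simp: ennreal_mult)
  also have "(\<integral>\<^sup>+x. ennreal (normal_density (b / q) \<sigma> x) \<partial>lborel) = 1"
    using \<sigma> by (subst nn_integral_eq_integral) auto
  finally show ?thesis by simp
qed

abbreviation std_normal_iid :: "'i set \<Rightarrow> ('i \<Rightarrow> real) measure" where
  "std_normal_iid J \<equiv> PiM J (\<lambda>_. std_normal_distribution)"

lemma prob_space_std_normal_distribution: "prob_space std_normal_distribution"
  using prob_space_normal_density[of 1 0] by simp

lemma prob_space_std_normal_iid: "prob_space (std_normal_iid J)"
  by (rule prob_space_PiM) (rule prob_space_std_normal_distribution)

lemma measurable_std_normal_distribution [simp]:
  "measurable std_normal_distribution N = measurable borel N"
  "measurable N std_normal_distribution = measurable N borel"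
  by (auto intro!: measurable_cong_sets)

lemma product_sigma_finite_std_normal:
  "product_sigma_finite (\<lambda>_::'i. std_normal_distribution)"
  "product_sigma_finite (\<lambda>_::'i. std_normal_iid J)"
  by (simp_all add: product_sigma_finite_def prob_space_imp_sigma_finite
      prob_space_std_normal_distribution prob_space_std_normal_iid)

lemma nn_integral_std_normal_exp_quadratic:
  fixes A B :: real
  assumes A: "A < 1 / 2"
  shows "(\<integral>\<^sup>+z. ennreal (exp (A * z\<^sup>2 + B * z)) \<partial>std_normal_distribution)
    = ennreal (exp (B\<^sup>2 / (2 * (1 - 2 * A))) / sqrt (1 - 2 * A))"
proof -
  define q where "q = 1 - 2 * A"
  have q: "q > 0" using A by (simp add: q_def)
  have density: "std_normal_density z * exp (A * z\<^sup>2 + B * z)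
      = 1 / sqrt (2 * pi) * exp (- q * z\<^sup>2 / 2 + B * z)"
    for z :: real
    unfolding std_normal_density_def q_def mult.assoc exp_add[symmetric] by (simp add: field_simps)
  have "(\<integral>\<^sup>+z. ennreal (exp (A * z\<^sup>2 + B * z)) \<partial>std_normal_distribution)
      = (\<integral>\<^sup>+z. ennreal (1 / sqrt (2 * pi)) * ennreal (exp (- q * z\<^sup>2 / 2 + B * z)) \<partial>lborel)"
    by (subst nn_integral_density) (auto simp: ennreal_mult[symmetric] density)
  also have "\<dots> = ennreal (1 / sqrt (2 * pi) * (sqrt (2 * pi / q) * exp (B\<^sup>2 / (2 * q))))"
    using nn_integral_lborel_exp_quadratic[OF q, of B]
    by (subst nn_integral_cmult) (auto simp: ennreal_mult'[symmetric])
  also have "1 / sqrt (2 * pi) * (sqrt (2 * pi / q) * exp (B\<^sup>2 / (2 * q))) = exp (B\<^sup>2 / (2 * q)) / sqrt q"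
    using q by (simp add: real_sqrt_divide field_simps)
  finally show ?thesis by (simp add: q_def)
qed

lemma nn_integral_std_normal_exp_shifted_square:
  fixes \<gamma> v :: real
  assumes "\<gamma> < 1 / 2"
  shows "(\<integral>\<^sup>+z. ennreal (exp (\<gamma> * (z + v)\<^sup>2)) \<partial>std_normal_distribution)
    = ennreal (exp (\<gamma> * v\<^sup>2 / (1 - 2 * \<gamma>)) / sqrt (1 - 2 * \<gamma>))"
proof -
  have "(\<integral>\<^sup>+z. ennreal (exp (\<gamma> * (z + v)\<^sup>2)) \<partial>std_normal_distribution)
      = ennreal (exp (\<gamma> * v\<^sup>2)) * (\<integral>\<^sup>+z. ennreal (exp (\<gamma> * z\<^sup>2 + 2 * \<gamma> * v * z)) \<partial>std_normal_distribution)"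
    by (subst nn_integral_cmult[symmetric])
      (auto simp: ennreal_mult[symmetric] exp_add[symmetric] power2_eq_square algebra_simps)
  also have "\<dots> = ennreal (exp (\<gamma> * v\<^sup>2) * (exp ((2 * \<gamma> * v)\<^sup>2 / (2 * (1 - 2 * \<gamma>))) / sqrt (1 - 2 * \<gamma>)))"
    using assms by (simp add: nn_integral_std_normal_exp_quadratic ennreal_mult'[symmetric])
  also have "exp (\<gamma> * v\<^sup>2) * (exp ((2 * \<gamma> * v)\<^sup>2 / (2 * (1 - 2 * \<gamma>))) / sqrt (1 - 2 * \<gamma>))
      = exp (\<gamma> * v\<^sup>2 / (1 - 2 * \<gamma>)) / sqrt (1 - 2 * \<gamma>)"
  proof -
    have "\<gamma> * v\<^sup>2 + (2 * \<gamma> * v)\<^sup>2 / (2 * (1 - 2 * \<gamma>)) = \<gamma> * v\<^sup>2 / (1 - 2 * \<gamma>)"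
      using assms by (simp add: field_simps power2_eq_square)
    then show ?thesis by (metis exp_add times_divide_eq_right)
  qed
  finally show ?thesis .
qed

lemma nn_integral_std_normal_iid_exp_linear:
  fixes y :: "'i \<Rightarrow> real"
  assumes J: "finite J"
  shows "(\<integral>\<^sup>+z. ennreal (exp (\<Sum>j\<in>J. c * z j * y j)) \<partial>std_normal_iid J)
    = ennreal (exp (c\<^sup>2 / 2 * (\<Sum>j\<in>J. (y j)\<^sup>2)))"
proof -
  have "(\<integral>\<^sup>+z. ennreal (exp (\<Sum>j\<in>J. c * z j * y j)) \<partial>std_normal_iid J)
      = (\<integral>\<^sup>+z. (\<Prod>j\<in>J. ennreal (exp (c * y j * z j))) \<partial>std_normal_iid J)"
    by (intro nn_integral_cong) (simp add: J exp_sum prod_ennreal mult_ac)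
  also have "\<dots> = (\<Prod>j\<in>J. \<integral>\<^sup>+x. ennreal (exp (c * y j * x)) \<partial>std_normal_distribution)"
    by (rule product_sigma_finite.product_nn_integral_prod[OF product_sigma_finite_std_normal(1) J]) auto
  also have "\<dots> = (\<Prod>j\<in>J. ennreal (exp ((c * y j)\<^sup>2 / 2)))"
    using nn_integral_std_normal_exp_quadratic[of 0] by simp
  also have "\<dots> = ennreal (exp (c\<^sup>2 / 2 * (\<Sum>j\<in>J. (y j)\<^sup>2)))"
    by (simp add: J prod_ennreal exp_sum[symmetric] sum_distrib_left power_mult_distrib)
  finally show ?thesis .
qed

lemma nn_integral_std_normal_iid_iid_exp_linear:
  fixes y :: "'i \<Rightarrow> 'j \<Rightarrow> real"
  assumes I: "finite I" and J: "finite J"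
  shows "(\<integral>\<^sup>+z. ennreal (exp (\<Sum>i\<in>I. \<Sum>k\<in>J. c * z i k * y i k)) \<partial>PiM I (\<lambda>_. std_normal_iid J))
    = ennreal (exp (c\<^sup>2 / 2 * (\<Sum>i\<in>I. \<Sum>k\<in>J. (y i k)\<^sup>2)))"
proof -
  have "(\<integral>\<^sup>+z. ennreal (exp (\<Sum>i\<in>I. \<Sum>k\<in>J. c * z i k * y i k)) \<partial>PiM I (\<lambda>_. std_normal_iid J))
      = (\<integral>\<^sup>+z. (\<Prod>i\<in>I. ennreal (exp (\<Sum>k\<in>J. c * z i k * y i k))) \<partial>PiM I (\<lambda>_. std_normal_iid J))"
    by (intro nn_integral_cong) (simp add: I exp_sum prod_ennreal)
  also have "\<dots> = (\<Prod>i\<in>I. \<integral>\<^sup>+w. ennreal (exp (\<Sum>k\<in>J. c * w k * y i k)) \<partial>std_normal_iid J)"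
    by (rule product_sigma_finite.product_nn_integral_prod[OF product_sigma_finite_std_normal(2) I])
      (use J in auto)
  also have "\<dots> = ennreal (exp (c\<^sup>2 / 2 * (\<Sum>i\<in>I. \<Sum>k\<in>J. (y i k)\<^sup>2)))"
    by (simp add: I nn_integral_std_normal_iid_exp_linear[OF J] prod_ennreal exp_sum[symmetric]
        sum_distrib_left)
  finally show ?thesis .
qed

lemma nn_integral_exp_sum_squares_Hubbard_Stratonovich:
  fixes Y :: "'i \<Rightarrow> 'k \<Rightarrow> 'a \<Rightarrow> real"
  assumes M: "sigma_finite_measure M" and I: "finite I" and J: "finite J"
    and Y: "\<And>i k. k \<in> J \<Longrightarrow> Y i k \<in> borel_measurable M"
  shows "(\<integral>\<^sup>+\<omega>. ennreal (exp (c\<^sup>2 / 2 * (\<Sum>i\<in>I. \<Sum>k\<in>J. (Y i k \<omega>)\<^sup>2))) \<partial>M)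
    = (\<integral>\<^sup>+z. (\<integral>\<^sup>+\<omega>. ennreal (exp (\<Sum>i\<in>I. \<Sum>k\<in>J. c * z i k * Y i k \<omega>)) \<partial>M)
        \<partial>PiM I (\<lambda>_. std_normal_iid J))"
proof -
  let ?Z = "PiM I (\<lambda>_. std_normal_iid J)"
  interpret Z: prob_space ?Z
    by (intro prob_space_PiM prob_space_std_normal_iid)
  interpret MZ: pair_sigma_finite M ?Z
    by (intro pair_sigma_finite.intro M Z.sigma_finite_measure_axioms)
  have z: "(\<lambda>z. z i k) \<in> borel_measurable ?Z" if "i \<in> I" "k \<in> J" for i k
  proof -
    have "(\<lambda>z. z i) \<in> measurable ?Z (std_normal_iid J)"
      using that by (intro measurable_component_singleton)
    moreover have "(\<lambda>w. w k) \<in> borel_measurable (std_normal_iid J)"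
      using measurable_component_singleton[of k J] that by simp
    ultimately show ?thesis by (rule measurable_compose)
  qed
  have joint: "(\<lambda>x. ennreal (exp (\<Sum>i\<in>I. \<Sum>k\<in>J. c * snd x i k * Y i k (fst x))))
      \<in> borel_measurable (M \<Otimes>\<^sub>M ?Z)"
    by (intro measurable_compose[OF _ measurable_ennreal] measurable_compose[OF _ borel_measurable_exp]
        borel_measurable_sum borel_measurable_times borel_measurable_const
        measurable_compose[OF measurable_snd z] measurable_compose[OF measurable_fst Y]) auto
  have "(\<integral>\<^sup>+\<omega>. (\<integral>\<^sup>+z. ennreal (exp (\<Sum>i\<in>I. \<Sum>k\<in>J. c * z i k * Y i k \<omega>)) \<partial>?Z) \<partial>M)
      = (\<integral>\<^sup>+z. (\<integral>\<^sup>+\<omega>. ennreal (exp (\<Sum>i\<in>I. \<Sum>k\<in>J. c * z i k * Y i k \<omega>)) \<partial>M) \<partial>?Z)"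
    by (rule MZ.Fubini'[symmetric]) (use joint in \<open>simp add: case_prod_beta'\<close>)
  then show ?thesis
    by (simp add: nn_integral_std_normal_iid_iid_exp_linear I J)
qed

lemma centered_gaussian_rv_measurable:
  "centered_gaussian_rv M X v \<Longrightarrow> X \<in> borel_measurable M"
  unfolding centered_gaussian_rv_def by (auto dest: distributed_measurable)

lemma centered_gaussian_rv_exp_moment:
  assumes M: "prob_space M" and X: "centered_gaussian_rv M X v"
  shows "(\<integral>\<^sup>+\<omega>. ennreal (exp (X \<omega>)) \<partial>M) = ennreal (exp (v / 2))"
  using X unfolding centered_gaussian_rv_def
proof (elim disjE conjE)
  assume "v = 0" and "AE \<omega> in M. X \<omega> = 0"
  then have "(\<integral>\<^sup>+\<omega>. ennreal (exp (X \<omega>)) \<partial>M) = (\<integral>\<^sup>+\<omega>. 1 \<partial>M)"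
    by (intro nn_integral_cong_AE) auto
  then show ?thesis
    using \<open>v = 0\<close> prob_space.emeasure_space_1[OF M] by simp
next
  assume v: "v > 0" and X: "distributed M lborel X (normal_density 0 (sqrt v))"
  have density: "normal_density 0 (sqrt v) x * exp x
      = 1 / sqrt (2 * pi * v) * exp (- (1 / v) * x\<^sup>2 / 2 + 1 * x)"
    for x
    using v by (simp add: normal_density_def exp_add[symmetric] field_simps)
  have "(\<integral>\<^sup>+\<omega>. ennreal (exp (X \<omega>)) \<partial>M)
      = (\<integral>\<^sup>+x. ennreal (1 / sqrt (2 * pi * v)) * ennreal (exp (- (1 / v) * x\<^sup>2 / 2 + 1 * x)) \<partial>lborel)"
    using v by (subst distributed_nn_integral[OF X, symmetric])
      (auto simp: ennreal_mult'[symmetric] density)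
  also have "\<dots> = ennreal (1 / sqrt (2 * pi * v) * (sqrt (2 * pi / (1 / v)) * exp (1\<^sup>2 / (2 * (1 / v)))))"
    using v nn_integral_lborel_exp_quadratic[of "1 / v" 1]
    by (subst nn_integral_cmult) (auto simp: ennreal_mult'[symmetric])
  also have "1 / sqrt (2 * pi * v) * (sqrt (2 * pi / (1 / v)) * exp (1\<^sup>2 / (2 * (1 / v)))) = exp (v / 2)"
    using v by simp
  finally show ?thesis .
qed

section \<open>The autoregressive sequence\<close>

definition ar_process :: "real \<Rightarrow> (nat \<Rightarrow> real) \<Rightarrow> nat \<Rightarrow> real" where
  "ar_process \<rho> z r = (\<Sum>p\<le>r. \<rho> ^ (r - p) * z p)"

lemma ar_process_Suc: "ar_process \<rho> z (Suc r) = z (Suc r) + \<rho> * ar_process \<rho> z r"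
  unfolding ar_process_def by (simp add: sum_distrib_left Suc_diff_le mult.assoc[symmetric])

lemma ar_process_fun_upd: "r \<le> n \<Longrightarrow> ar_process \<rho> (z(Suc n := y)) r = ar_process \<rho> z r"
  unfolding ar_process_def by (intro sum.cong) auto

lemma ar_process_eq_sum_lessThan:
  "r < m \<Longrightarrow> ar_process \<rho> z r = (\<Sum>p<m. if p \<le> r then \<rho> ^ (r - p) * z p else 0)"
proof -
  assume "r < m"
  then have "{p\<in>{..<m}. p \<le> r} = {..r}" by auto
  then show ?thesis
    unfolding ar_process_def by (simp add: sum.inter_filter[symmetric])
qed

lemma ar_process_measurable:
  "{..r} \<subseteq> J \<Longrightarrow> (\<lambda>z. ar_process \<rho> z r) \<in> borel_measurable (std_normal_iid J)"
  unfolding ar_process_def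
  by (intro borel_measurable_sum borel_measurable_times borel_measurable_const)
    (auto intro: measurable_component_singleton)

lemma ar_process_sum_squares_measurable [measurable]:
  "(\<lambda>w. \<Sum>r<m. (ar_process \<rho> w r)\<^sup>2) \<in> borel_measurable (std_normal_iid {..<m})"
  by (intro borel_measurable_sum borel_measurable_power ar_process_measurable) auto

lemma ar_process_exp_quadratic_measurable:
  "{..n} \<subseteq> J \<Longrightarrow> (\<lambda>z. ennreal (exp (\<beta> * (\<Sum>r<n. (ar_process \<rho> z r)\<^sup>2) + \<gamma> * (ar_process \<rho> z n)\<^sup>2)))
    \<in> borel_measurable (std_normal_iid J)"
  by (intro measurable_compose[OF _ measurable_ennreal] measurable_compose[OF _ borel_measurable_exp]
      borel_measurable_add borel_measurable_times borel_measurable_const borel_measurable_sum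
      borel_measurable_power ar_process_measurable) auto

lemma nn_integral_ar_process_0:
  fixes \<gamma> \<rho> :: real
  assumes "\<gamma> < 1 / 2"
  shows "(\<integral>\<^sup>+z. ennreal (exp (\<beta> * (\<Sum>r<0. (ar_process \<rho> z r)\<^sup>2) + \<gamma> * (ar_process \<rho> z 0)\<^sup>2))
      \<partial>std_normal_iid {..0}) = ennreal (1 / sqrt (1 - 2 * \<gamma>))"
proof -
  have "(\<integral>\<^sup>+z. ennreal (exp (\<beta> * (\<Sum>r<0. (ar_process \<rho> z r)\<^sup>2) + \<gamma> * (ar_process \<rho> z 0)\<^sup>2))
      \<partial>std_normal_iid {..0}) = (\<integral>\<^sup>+z. ennreal (exp (\<gamma> * (z 0 + 0)\<^sup>2)) \<partial>std_normal_iid {0 :: nat})"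
    by (simp add: ar_process_def)
  also have "\<dots> = (\<integral>\<^sup>+x. ennreal (exp (\<gamma> * (x + 0)\<^sup>2)) \<partial>std_normal_distribution)"
    by (rule product_sigma_finite.product_nn_integral_singleton[OF product_sigma_finite_std_normal(1)]) simp
  also have "\<dots> = ennreal (1 / sqrt (1 - 2 * \<gamma>))"
    using nn_integral_std_normal_exp_shifted_square[OF assms, of 0] by simp
  finally show ?thesis .
qed

lemma nn_integral_std_normal_ar_process_update:
  fixes \<beta> \<gamma> \<rho> :: real
  assumes \<gamma>: "\<gamma> < 1 / 2"
  shows "(\<integral>\<^sup>+y. ennreal (exp (\<beta> * (\<Sum>r<Suc n. (ar_process \<rho> (z(Suc n := y)) r)\<^sup>2)
        + \<gamma> * (ar_process \<rho> (z(Suc n := y)) (Suc n))\<^sup>2)) \<partial>std_normal_distribution)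
    = ennreal (1 / sqrt (1 - 2 * \<gamma>)) * ennreal (exp (\<beta> * (\<Sum>r<n. (ar_process \<rho> z r)\<^sup>2)
        + (\<beta> + \<gamma> * \<rho>\<^sup>2 / (1 - 2 * \<gamma>)) * (ar_process \<rho> z n)\<^sup>2))"
proof -
  define u where "u = ar_process \<rho> z n"
  define S where "S = (\<Sum>r<n. (ar_process \<rho> z r)\<^sup>2)"
  have "(\<integral>\<^sup>+y. ennreal (exp (\<beta> * (\<Sum>r<Suc n. (ar_process \<rho> (z(Suc n := y)) r)\<^sup>2)
        + \<gamma> * (ar_process \<rho> (z(Suc n := y)) (Suc n))\<^sup>2)) \<partial>std_normal_distribution)
      = (\<integral>\<^sup>+y. ennreal (exp (\<beta> * S + \<beta> * u\<^sup>2)) * ennreal (exp (\<gamma> * (y + \<rho> * u)\<^sup>2)) \<partial>std_normal_distribution)"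
    by (simp add: S_def u_def ar_process_fun_upd ar_process_Suc distrib_left exp_add ennreal_mult)
  also have "\<dots> = ennreal (exp (\<beta> * S + \<beta> * u\<^sup>2))
      * (\<integral>\<^sup>+y. ennreal (exp (\<gamma> * (y + \<rho> * u)\<^sup>2)) \<partial>std_normal_distribution)"
    by (rule nn_integral_cmult) simp
  also have "\<dots> = ennreal (exp (\<beta> * S + \<beta> * u\<^sup>2) * (exp (\<gamma> * (\<rho> * u)\<^sup>2 / (1 - 2 * \<gamma>)) / sqrt (1 - 2 * \<gamma>)))"
    using \<gamma> by (simp only: nn_integral_std_normal_exp_shifted_square) (rule ennreal_mult[symmetric]; simp)
  also have "\<dots> = ennreal (1 / sqrt (1 - 2 * \<gamma>) * exp (\<beta> * S + (\<beta> + \<gamma> * \<rho>\<^sup>2 / (1 - 2 * \<gamma>)) * u\<^sup>2))"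
  proof -
    have exponent: "\<beta> * S + \<beta> * u\<^sup>2 + \<gamma> * (\<rho> * u)\<^sup>2 / (1 - 2 * \<gamma>)
        = \<beta> * S + (\<beta> + \<gamma> * \<rho>\<^sup>2 / (1 - 2 * \<gamma>)) * u\<^sup>2"
      by (simp add: power_mult_distrib algebra_simps)
    have "exp (\<beta> * S + \<beta> * u\<^sup>2) * (exp (\<gamma> * (\<rho> * u)\<^sup>2 / (1 - 2 * \<gamma>)) / sqrt (1 - 2 * \<gamma>))
        = exp (\<beta> * S + \<beta> * u\<^sup>2 + \<gamma> * (\<rho> * u)\<^sup>2 / (1 - 2 * \<gamma>)) / sqrt (1 - 2 * \<gamma>)"
      by (simp add: exp_add)
    also have "\<dots> = 1 / sqrt (1 - 2 * \<gamma>) * exp (\<beta> * S + (\<beta> + \<gamma> * \<rho>\<^sup>2 / (1 - 2 * \<gamma>)) * u\<^sup>2)"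
      unfolding exponent by simp
    finally show ?thesis
      by (rule arg_cong)
  qed
  finally show ?thesis
    using \<gamma> by (simp add: S_def u_def ennreal_mult'[symmetric])
qed

lemma nn_integral_ar_process_Suc:
  fixes \<beta> \<gamma> \<rho> :: real
  assumes \<gamma>: "\<gamma> < 1 / 2"
  shows "(\<integral>\<^sup>+z. ennreal (exp (\<beta> * (\<Sum>r<Suc n. (ar_process \<rho> z r)\<^sup>2) + \<gamma> * (ar_process \<rho> z (Suc n))\<^sup>2))
      \<partial>std_normal_iid {..Suc n})
    = ennreal (1 / sqrt (1 - 2 * \<gamma>)) * (\<integral>\<^sup>+z. ennreal (exp (\<beta> * (\<Sum>r<n. (ar_process \<rho> z r)\<^sup>2)
      + (\<beta> + \<gamma> * \<rho>\<^sup>2 / (1 - 2 * \<gamma>)) * (ar_process \<rho> z n)\<^sup>2)) \<partial>std_normal_iid {..n})"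
proof -
  let ?F = "\<lambda>z. ennreal (exp (\<beta> * (\<Sum>r<Suc n. (ar_process \<rho> z r)\<^sup>2) + \<gamma> * (ar_process \<rho> z (Suc n))\<^sup>2))"
  let ?G = "\<lambda>z. ennreal (exp (\<beta> * (\<Sum>r<n. (ar_process \<rho> z r)\<^sup>2)
    + (\<beta> + \<gamma> * \<rho>\<^sup>2 / (1 - 2 * \<gamma>)) * (ar_process \<rho> z n)\<^sup>2))"
  interpret std_normal: product_sigma_finite "\<lambda>_::nat. std_normal_distribution"
    by (rule product_sigma_finite_std_normal)
  have "(\<integral>\<^sup>+z. ?F z \<partial>std_normal_iid (insert (Suc n) {..n}))
      = (\<integral>\<^sup>+z. (\<integral>\<^sup>+y. ?F (z(Suc n := y)) \<partial>std_normal_distribution) \<partial>std_normal_iid {..n})"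
    by (rule std_normal.product_nn_integral_insert[OF _ _ ar_process_exp_quadratic_measurable]) auto
  also have "\<dots> = (\<integral>\<^sup>+z. ennreal (1 / sqrt (1 - 2 * \<gamma>)) * ?G z \<partial>std_normal_iid {..n})"
    by (simp only: nn_integral_std_normal_ar_process_update[OF \<gamma>])
  also have "\<dots> = ennreal (1 / sqrt (1 - 2 * \<gamma>)) * (\<integral>\<^sup>+z. ?G z \<partial>std_normal_iid {..n})"
    by (rule nn_integral_cmult[OF ar_process_exp_quadratic_measurable]) simp
  finally show ?thesis
    by (simp only: atMost_Suc)
qed

text \<open>The Riccati map \<open>\<gamma> \<mapsto> \<beta> + \<rho>\<^sup>2 \<gamma> / (1 - 2 \<gamma>)\<close> of the last step keeps \<open>[0, \<beta>\<^sub>0]\<close>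
  invariant, which closes the induction.\<close>

lemma nn_integral_ar_process_exp_quadratic_le:
  fixes \<beta> \<beta>\<^sub>0 \<rho> :: real
  assumes \<beta>: "0 \<le> \<beta>" and \<beta>\<^sub>0: "2 * \<beta>\<^sub>0 < 1" and invariant: "\<beta> + \<rho>\<^sup>2 * \<beta>\<^sub>0 / (1 - 2 * \<beta>\<^sub>0) \<le> \<beta>\<^sub>0"
    and "0 \<le> \<gamma>" "\<gamma> \<le> \<beta>\<^sub>0"
  shows "(\<integral>\<^sup>+z. ennreal (exp (\<beta> * (\<Sum>r<n. (ar_process \<rho> z r)\<^sup>2) + \<gamma> * (ar_process \<rho> z n)\<^sup>2))
      \<partial>std_normal_iid {..n})
    \<le> ennreal ((1 - 2 * \<beta>\<^sub>0) powr (- (real n + 1) / 2))"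
  using assms(4,5)
proof (induction n arbitrary: \<gamma>)
  have step: "1 / sqrt (1 - 2 * \<gamma>) \<le> (1 - 2 * \<beta>\<^sub>0) powr (- 1 / 2)" if "0 \<le> \<gamma>" "\<gamma> \<le> \<beta>\<^sub>0" for \<gamma>
    using that \<beta>\<^sub>0 by (simp add: powr_minus_divide powr_half_sqrt divide_left_mono)
  {
    case 0
    then show ?case
      using nn_integral_ar_process_0[of \<gamma>] step[OF 0] \<beta>\<^sub>0 by (simp add: ennreal_leI)
  next
    case (Suc n)
    define \<gamma>' where "\<gamma>' = \<beta> + \<gamma> * \<rho>\<^sup>2 / (1 - 2 * \<gamma>)"
    have \<gamma>: "\<gamma> < 1 / 2" using Suc.prems \<beta>\<^sub>0 by simp
    have "\<gamma> * \<rho>\<^sup>2 / (1 - 2 * \<gamma>) \<le> \<rho>\<^sup>2 * \<beta>\<^sub>0 / (1 - 2 * \<beta>\<^sub>0)"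
      using Suc.prems \<beta>\<^sub>0 by (intro frac_le) (auto intro: mult_right_mono simp: mult.commute)
    then have \<gamma>': "0 \<le> \<gamma>'" "\<gamma>' \<le> \<beta>\<^sub>0"
      using \<beta> Suc.prems \<gamma> invariant by (auto simp: \<gamma>'_def)
    have "(\<integral>\<^sup>+z. ennreal (exp (\<beta> * (\<Sum>r<Suc n. (ar_process \<rho> z r)\<^sup>2) + \<gamma> * (ar_process \<rho> z (Suc n))\<^sup>2))
        \<partial>std_normal_iid {..Suc n})
        \<le> ennreal (1 / sqrt (1 - 2 * \<gamma>)) * ennreal ((1 - 2 * \<beta>\<^sub>0) powr (- (real n + 1) / 2))"
      unfolding nn_integral_ar_process_Suc[OF \<gamma>] \<gamma>'_def[symmetric]
      by (intro mult_left_mono Suc.IH \<gamma>') auto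
    also have "\<dots> \<le> ennreal ((1 - 2 * \<beta>\<^sub>0) powr (- 1 / 2) * (1 - 2 * \<beta>\<^sub>0) powr (- (real n + 1) / 2))"
    proof -
      have "1 / sqrt (1 - 2 * \<gamma>) * (1 - 2 * \<beta>\<^sub>0) powr (- (real n + 1) / 2)
          \<le> (1 - 2 * \<beta>\<^sub>0) powr (- 1 / 2) * (1 - 2 * \<beta>\<^sub>0) powr (- (real n + 1) / 2)"
        by (rule mult_right_mono[OF step[OF Suc.prems]]) simp
      then show ?thesis
        using \<gamma> by (subst ennreal_mult[symmetric]) (auto intro: ennreal_leI)
    qed
    also have "(1 - 2 * \<beta>\<^sub>0) powr (- 1 / 2) * (1 - 2 * \<beta>\<^sub>0) powr (- (real n + 1) / 2)
        = (1 - 2 * \<beta>\<^sub>0) powr (- (real (Suc n) + 1) / 2)"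
    proof -
      have "- 1 / 2 + - (real n + 1) / 2 = - (real (Suc n) + 1) / 2"
        by (simp add: field_simps)
      then show ?thesis
        by (metis powr_add)
    qed
    finally show ?case .
  }
qed

lemma nn_integral_ar_process_exp_sum_squares_le:
  fixes \<beta> \<beta>\<^sub>0 \<rho> :: real
  assumes "0 \<le> \<beta>" "\<beta> \<le> \<beta>\<^sub>0" "2 * \<beta>\<^sub>0 < 1" "\<beta> + \<rho>\<^sup>2 * \<beta>\<^sub>0 / (1 - 2 * \<beta>\<^sub>0) \<le> \<beta>\<^sub>0"
  shows "(\<integral>\<^sup>+z. ennreal (exp (\<beta> * (\<Sum>r<m. (ar_process \<rho> z r)\<^sup>2))) \<partial>std_normal_iid {..<m})
    \<le> ennreal ((1 - 2 * \<beta>\<^sub>0) powr (- real m / 2))"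
proof (cases m)
  case 0
  then show ?thesis
    using prob_space.emeasure_space_1[OF prob_space_std_normal_iid[of "{} :: nat set"]] assms(3) by simp
next
  case (Suc n)
  have "(\<integral>\<^sup>+z. ennreal (exp (\<beta> * (\<Sum>r<m. (ar_process \<rho> z r)\<^sup>2))) \<partial>std_normal_iid {..<m})
      = (\<integral>\<^sup>+z. ennreal (exp (\<beta> * (\<Sum>r<n. (ar_process \<rho> z r)\<^sup>2) + \<beta> * (ar_process \<rho> z n)\<^sup>2))
        \<partial>std_normal_iid {..n})"
    unfolding Suc lessThan_Suc_atMost[symmetric] by (simp add: distrib_left)
  also have "\<dots> \<le> ennreal ((1 - 2 * \<beta>\<^sub>0) powr (- (real n + 1) / 2))"
    using assms by (intro nn_integral_ar_process_exp_quadratic_le) auto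
  finally show ?thesis
    using Suc by (simp add: add.commute)
qed

lemma ar_riccati_invariant_small_mesh:
  fixes \<kappa> a b h :: real
  assumes \<kappa>: "\<kappa> > 0" and a: "a > 0" and b: "b > 0" and h: "h > 0"
    and hb: "2 * h * b < 1" and small: "4 * \<kappa> * b\<^sup>2 * h \<le> 2 * b * (\<kappa> - b) - a"
  defines "\<rho> \<equiv> exp (- \<kappa> * h)"
  shows "a * h * ((1 - \<rho>\<^sup>2) / (2 * \<kappa>)) + \<rho>\<^sup>2 * (h * b) / (1 - 2 * (h * b)) \<le> h * b"
proof -
  define x where "x = 1 - \<rho>\<^sup>2"
  have "\<rho>\<^sup>2 = exp (- (2 * \<kappa> * h))"
    unfolding \<rho>_def by (simp add: power2_eq_square exp_add[symmetric])
  then have x: "2 * \<kappa> * h / (1 + 2 * \<kappa> * h) \<le> x"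
    using one_minus_exp_neg_bounds(1)[of "2 * \<kappa> * h"] \<kappa> h unfolding x_def by simp
  have "0 < 2 * b\<^sup>2 + 4 * \<kappa> * b\<^sup>2 * h"
    using \<kappa> b h by (intro add_pos_pos) auto
  moreover have "a \<le> 2 * b * \<kappa> - (2 * b\<^sup>2 + 4 * \<kappa> * b\<^sup>2 * h)"
    using small by (simp add: algebra_simps power2_eq_square)
  ultimately have "a < 2 * b * \<kappa>"
    by linarith
  then have c: "b - a / (2 * \<kappa>) > 0"
    using \<kappa> by (simp add: field_simps)
  have "2 * h * b\<^sup>2 * (1 + 2 * \<kappa> * h) \<le> h * (2 * \<kappa> * b - a)"
    using mult_left_mono[OF small, of h] h by (simp add: algebra_simps power2_eq_square)
  then have "2 * h * b\<^sup>2 \<le> h * (2 * \<kappa> * b - a) / (1 + 2 * \<kappa> * h)"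
    using \<kappa> h by (subst pos_le_divide_eq) (auto intro: add_pos_pos)
  also have "\<dots> = 2 * \<kappa> * h / (1 + 2 * \<kappa> * h) * (b - a / (2 * \<kappa>))"
  proof -
    have "2 * \<kappa> * h * (b - a / (2 * \<kappa>)) = h * (2 * \<kappa> * b - a)"
      using \<kappa> by (simp add: field_simps)
    then show ?thesis by (simp only: times_divide_eq_left)
  qed
  also have "\<dots> \<le> x * (b - a / (2 * \<kappa>))"
    using x c by (intro mult_right_mono) auto
  finally have key: "2 * h * b\<^sup>2 \<le> x * (b - a / (2 * \<kappa>))" .
  define \<beta> where "\<beta> = a * h * (x / (2 * \<kappa>))"
  have "\<beta> \<le> h * b * (x - 2 * h * b)"
    using mult_left_mono[OF key, of h] h by (simp add: \<beta>_def algebra_simps power2_eq_square)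
  moreover have "0 < 2 * \<kappa> * h / (1 + 2 * \<kappa> * h)"
    using \<kappa> h by (simp add: add_pos_pos)
  then have "\<beta> \<ge> 0"
    using a h \<kappa> x by (simp add: \<beta>_def)
  then have "\<beta> * (1 - 2 * (h * b)) \<le> \<beta>"
    by (rule mult_left_le[rotated]) (use h b in simp)
  ultimately have "\<beta> * (1 - 2 * (h * b)) + (1 - x) * (h * b) \<le> h * b * (1 - 2 * (h * b))"
    by (simp add: algebra_simps)
  then show ?thesis
    using hb by (simp add: \<beta>_def x_def field_simps)
qed

lemma nn_integral_ar_process_grid_le:
  fixes \<kappa> a b b\<^sub>1 h :: real
  assumes \<kappa>: "\<kappa> > 0" and a: "a > 0" and b: "b > 0" and h: "h > 0"
    and ah: "a * h \<le> b" and small: "4 * \<kappa> * b\<^sup>2 * h \<le> 2 * b * (\<kappa> - b) - a"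
    and b\<^sub>1: "2 * h * b * b\<^sub>1 \<le> b\<^sub>1 - b" and hb: "2 * h * b < 1"
  defines "\<rho> \<equiv> exp (- \<kappa> * h)"
  shows "(\<integral>\<^sup>+w. ennreal (exp (a * h * ((1 - \<rho>\<^sup>2) / (2 * \<kappa>)) * (\<Sum>r<m. (ar_process \<rho> w r)\<^sup>2)))
      \<partial>std_normal_iid {..<m})
    \<le> ennreal (exp (h * b\<^sub>1)) ^ m"
proof -
  have "\<rho>\<^sup>2 = exp (- (2 * \<kappa> * h))"
    unfolding \<rho>_def by (simp add: power2_eq_square exp_add[symmetric])
  then have "0 \<le> 1 - \<rho>\<^sup>2" "1 - \<rho>\<^sup>2 \<le> 2 * \<kappa> * h"
    using one_minus_exp_neg_bounds(2)[of "2 * \<kappa> * h"] \<kappa> h by auto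
  have \<beta>_nonneg: "0 \<le> a * h * ((1 - \<rho>\<^sup>2) / (2 * \<kappa>))"
    using a h \<kappa> \<open>0 \<le> 1 - \<rho>\<^sup>2\<close> by simp
  have "a * h * ((1 - \<rho>\<^sup>2) / (2 * \<kappa>)) \<le> a * h * ((2 * \<kappa> * h) / (2 * \<kappa>))"
    using a h \<kappa> \<open>1 - \<rho>\<^sup>2 \<le> 2 * \<kappa> * h\<close> by (intro mult_left_mono divide_right_mono) auto
  also have "\<dots> = h * (a * h)"
    using \<kappa> by simp
  also have "\<dots> \<le> h * b"
    using ah h by simp
  finally have "(\<integral>\<^sup>+w. ennreal (exp (a * h * ((1 - \<rho>\<^sup>2) / (2 * \<kappa>)) * (\<Sum>r<m. (ar_process \<rho> w r)\<^sup>2)))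
      \<partial>std_normal_iid {..<m}) \<le> ennreal ((1 - 2 * (h * b)) powr (- real m / 2))"
    using \<beta>_nonneg hb ar_riccati_invariant_small_mesh[OF \<kappa> a b h hb small]
    by (intro nn_integral_ar_process_exp_sum_squares_le) (auto simp: \<rho>_def)
  also have "(1 - 2 * (h * b)) powr (- real m / 2) = ((1 - 2 * (h * b)) powr (- 1 / 2)) ^ m"
    using hb by (simp add: powr_realpow[symmetric] powr_powr)
  also have "ennreal \<dots> \<le> ennreal (exp (h * b\<^sub>1) ^ m)"
  proof (intro ennreal_leI power_mono)
    have "2 * (h * b) / (2 * (1 - 2 * (h * b))) \<le> h * b\<^sub>1"
      using mult_left_mono[OF b\<^sub>1, of "2 * h"] hb h by (simp add: field_simps)
    moreover have "(1 - 2 * (h * b)) powr (- 1 / 2) \<le> exp (2 * (h * b) / (2 * (1 - 2 * (h * b))))"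
      using h b hb by (intro powr_minus_half_le_exp) auto
    ultimately show "(1 - 2 * (h * b)) powr (- 1 / 2) \<le> exp (h * b\<^sub>1)"
      by (meson exp_le_cancel_iff order_trans)
  qed simp
  finally show ?thesis
    by (simp add: ennreal_power)
qed

section \<open>The Ornstein-Uhlenbeck process on a grid\<close>

lemma OU_process_prob_space: "OU_process M \<kappa> B \<Longrightarrow> prob_space M"
  unfolding OU_process_def by (rule conjunct1)

lemma OU_process_continuous: "OU_process M \<kappa> B \<Longrightarrow> \<omega> \<in> space M \<Longrightarrow> continuous_on {0..} (B \<omega>)"
  unfolding OU_process_def by blast

lemma OU_process_centered_gaussian:
  fixes B :: "'a \<Rightarrow> real \<Rightarrow> real ^ 'n" and J :: "'j set"
  assumes OU: "OU_process M \<kappa> B" and J: "finite J" and s: "\<And>j. j \<in> J \<Longrightarrow> s j \<ge> 0"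
  shows "centered_gaussian_rv M (\<lambda>\<omega>. \<Sum>j\<in>J. c j * (B \<omega> (s j) $ i j))
    (\<Sum>j\<in>J. \<Sum>j'\<in>J. c j * c j' * (if i j = i j' then OU_cov \<kappa> (s j) (s j') else 0))"
proof -
  obtain e where e: "bij_betw e {..<card J} J"
    using ex_bij_betw_nat_finite[OF J] by (auto simp: atLeast0LessThan)
  have "\<forall>k<card J. 0 \<le> (s \<circ> e) k"
    using e s unfolding bij_betw_def by auto
  then have "centered_gaussian_rv M (\<lambda>\<omega>. \<Sum>k<card J. (c \<circ> e) k * (B \<omega> ((s \<circ> e) k) $ (i \<circ> e) k))
      (\<Sum>k<card J. \<Sum>k'<card J. (c \<circ> e) k * (c \<circ> e) k' *
        (if (i \<circ> e) k = (i \<circ> e) k' then OU_cov \<kappa> ((s \<circ> e) k) ((s \<circ> e) k') else 0))"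
    using OU unfolding OU_process_def by blast
  then show ?thesis
    by (simp only: comp_def sum.reindex_bij_betw[OF e, symmetric])
qed

lemma OU_process_measurable:
  assumes "OU_process M \<kappa> B" and "s \<ge> 0"
  shows "(\<lambda>\<omega>. B \<omega> s $ i) \<in> borel_measurable M"
  using centered_gaussian_rv_measurable[OF OU_process_centered_gaussian[OF assms(1), of "{()}"
      "\<lambda>_. s" "\<lambda>_. 1" "\<lambda>_. i"]] assms(2)
  by simp

lemma OU_process_exp_moment:
  fixes B :: "'a \<Rightarrow> real \<Rightarrow> real ^ 'n" and J :: "'j set"
  assumes OU: "OU_process M \<kappa> B" and "finite J" and "\<And>j. j \<in> J \<Longrightarrow> s j \<ge> 0"
  shows "(\<integral>\<^sup>+\<omega>. ennreal (exp (\<Sum>j\<in>J. c j * (B \<omega> (s j) $ i j))) \<partial>M)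
    = ennreal (exp ((\<Sum>j\<in>J. \<Sum>j'\<in>J. c j * c j' * (if i j = i j' then OU_cov \<kappa> (s j) (s j') else 0)) / 2))"
  using centered_gaussian_rv_exp_moment[OF OU_process_prob_space[OF OU]
      OU_process_centered_gaussian[OF assms]] .

lemma OU_norm_measurable:
  fixes B :: "'a \<Rightarrow> real \<Rightarrow> real ^ 'n"
  assumes OU: "OU_process M \<kappa> B" and s: "s \<ge> 0"
  shows "(\<lambda>\<omega>. norm (B \<omega> s)) \<in> borel_measurable M"
proof -
  have "(\<lambda>\<omega>. sqrt (\<Sum>i\<in>UNIV. (B \<omega> s $ i)\<^sup>2)) \<in> borel_measurable M"
    using OU_process_measurable[OF OU s]
    by (intro measurable_compose[OF _ borel_measurable_sqrt] borel_measurable_sum borel_measurable_power)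
  then show ?thesis
    by (simp add: power2_norm_vec_eq_sum[symmetric])
qed

text \<open>Grid times are numbered backwards, \<open>s\<^sub>p = (m - p) h\<close>, so that the covariance factors
  through the forward recursion of \<open>ar_process\<close>.\<close>

lemma OU_cov_grid:
  fixes \<kappa> h :: real
  assumes \<kappa>: "\<kappa> > 0" and h: "h > 0" and p: "p < m" and q: "q < m"
  defines "\<rho> \<equiv> exp (- \<kappa> * h)"
  shows "OU_cov \<kappa> (real (m - p) * h) (real (m - q) * h)
    = (1 - \<rho>\<^sup>2) / (2 * \<kappa>) * (\<Sum>r\<in>{max p q..<m}. \<rho> ^ (r - p) * \<rho> ^ (r - q))"
proof -
  define M where "M = max p q"
  have M: "M < m" "p \<le> M" "q \<le> M" using p q by (auto simp: M_def)
  have \<rho>: "\<rho> > 0" by (simp add: \<rho>_def)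
  have exp_\<rho>: "\<rho> ^ n = exp (- \<kappa> * h * real n)" for n
    unfolding \<rho>_def by (metis exp_of_nat_mult mult.commute)
  have "(1 - \<rho>\<^sup>2) * (\<Sum>r\<in>{M..<m}. \<rho> ^ (r - p) * \<rho> ^ (r - q))
      = (1 - \<rho>\<^sup>2) * (\<Sum>r=M..m - 1. (\<rho>\<^sup>2) ^ r) / \<rho> ^ (p + q)"
  proof -
    have "\<rho> ^ (r - p) * \<rho> ^ (r - q) = (\<rho>\<^sup>2) ^ r / \<rho> ^ (p + q)" if "M \<le> r" for r
      using that M \<rho> by (simp add: field_simps power_add[symmetric] power_mult[symmetric] mult_2_right)
    moreover have "{M..<m} = {M..m - 1}" using M by auto
    ultimately show ?thesis by (simp add: sum_divide_distrib[symmetric])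
  qed
  also have "\<dots> = ((\<rho>\<^sup>2) ^ M - (\<rho>\<^sup>2) ^ m) / \<rho> ^ (p + q)"
    using M by (simp add: sum_gp_multiplied)
  also have "\<dots> = exp (- \<kappa> * \<bar>real (m - p) * h - real (m - q) * h\<bar>)
      - exp (- \<kappa> * (real (m - p) * h + real (m - q) * h))"
  proof -
    have quotient: "(\<rho>\<^sup>2) ^ n / \<rho> ^ (p + q) = exp (- \<kappa> * ((real (2 * n) - real (p + q)) * h))"
      if "p + q \<le> 2 * n" for n
    proof -
      have "(\<rho>\<^sup>2) ^ n / \<rho> ^ (p + q) = \<rho> ^ (2 * n - (p + q))"
        unfolding power_mult[symmetric] using power_diff[OF _ that, of \<rho>] \<rho> by simp
      then show ?thesis
        using that by (simp add: exp_\<rho> mult_ac)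
    qed
    have "\<bar>real (m - p) * h - real (m - q) * h\<bar> = (real (2 * M) - real (p + q)) * h"
      using M p q h by (auto simp: M_def abs_mult left_diff_distrib[symmetric])
    moreover have "real (m - p) * h + real (m - q) * h = (real (2 * m) - real (p + q)) * h"
      using p q by (simp add: algebra_simps)
    ultimately show ?thesis
      using M by (simp add: diff_divide_distrib quotient)
  qed
  finally show ?thesis
    unfolding OU_cov_def M_def[symmetric] using \<kappa> by (simp add: field_simps)
qed

lemma OU_cov_grid_quadratic_form:
  fixes \<kappa> h :: real and z :: "nat \<Rightarrow> real"
  assumes \<kappa>: "\<kappa> > 0" and h: "h > 0"
  defines "\<rho> \<equiv> exp (- \<kappa> * h)"
  shows "(\<Sum>p<m. \<Sum>q<m. z p * z q * OU_cov \<kappa> (real (m - p) * h) (real (m - q) * h))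
    = (1 - \<rho>\<^sup>2) / (2 * \<kappa>) * (\<Sum>r<m. (ar_process \<rho> z r)\<^sup>2)"
proof -
  let ?a = "\<lambda>r p. if p \<le> r then \<rho> ^ (r - p) * z p else 0"
  have "(\<Sum>r<m. (ar_process \<rho> z r)\<^sup>2) = (\<Sum>r<m. \<Sum>p<m. \<Sum>q<m. ?a r p * ?a r q)"
    by (intro sum.cong refl) (simp add: ar_process_eq_sum_lessThan power2_eq_square sum_product)
  also have "\<dots> = (\<Sum>p<m. \<Sum>q<m. \<Sum>r<m. ?a r p * ?a r q)"
    by (subst sum.swap) (intro sum.cong refl sum.swap)
  also have "\<dots> = (\<Sum>p<m. \<Sum>q<m. z p * z q * (\<Sum>r\<in>{max p q..<m}. \<rho> ^ (r - p) * \<rho> ^ (r - q)))"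
  proof (intro sum.cong refl)
    fix p q
    have "(\<Sum>r<m. ?a r p * ?a r q) = (\<Sum>r\<in>{r\<in>{..<m}. max p q \<le> r}. z p * z q * (\<rho> ^ (r - p) * \<rho> ^ (r - q)))"
      by (subst sum.inter_filter) (auto intro: sum.cong)
    also have "{r\<in>{..<m}. max p q \<le> r} = {max p q..<m}" by auto
    finally show "(\<Sum>r<m. ?a r p * ?a r q) = z p * z q * (\<Sum>r\<in>{max p q..<m}. \<rho> ^ (r - p) * \<rho> ^ (r - q))"
      by (simp add: sum_distrib_left)
  qed
  finally show ?thesis
    using OU_cov_grid[OF \<kappa> h] unfolding \<rho>_def by (simp add: sum_distrib_left mult_ac)
qed

lemma OU_grid_exp_moment:
  fixes B :: "'a \<Rightarrow> real \<Rightarrow> real ^ 'n" and \<kappa> h c :: real and z :: "'n \<Rightarrow> nat \<Rightarrow> real"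
  assumes OU: "OU_process M \<kappa> B" and \<kappa>: "\<kappa> > 0" and h: "h > 0"
  defines "\<rho> \<equiv> exp (- \<kappa> * h)"
  shows "(\<integral>\<^sup>+\<omega>. ennreal (exp (\<Sum>i\<in>UNIV. \<Sum>k<m. c * z i k * (B \<omega> (real (m - k) * h) $ i))) \<partial>M)
    = ennreal (exp (c\<^sup>2 / 2 * ((1 - \<rho>\<^sup>2) / (2 * \<kappa>)) * (\<Sum>i\<in>UNIV. \<Sum>r<m. (ar_process \<rho> (z i) r)\<^sup>2)))"
proof -
  let ?s = "\<lambda>k. real (m - k) * h"
  let ?J = "UNIV \<times> {..<m}"
  have "(\<Sum>i\<in>UNIV. \<Sum>k<m. c * z i k * (B \<omega> (?s k) $ i))
      = (\<Sum>j\<in>?J. c * z (fst j) (snd j) * (B \<omega> (?s (snd j)) $ fst j))" for \<omega>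
    unfolding sum.cartesian_product case_prod_beta ..
  then have "(\<integral>\<^sup>+\<omega>. ennreal (exp (\<Sum>i\<in>UNIV. \<Sum>k<m. c * z i k * (B \<omega> (?s k) $ i))) \<partial>M)
      = (\<integral>\<^sup>+\<omega>. ennreal (exp (\<Sum>j\<in>?J. c * z (fst j) (snd j) * (B \<omega> (?s (snd j)) $ fst j))) \<partial>M)"
    by simp
  also have "\<dots> = ennreal (exp ((\<Sum>j\<in>?J. \<Sum>j'\<in>?J. c * z (fst j) (snd j) * (c * z (fst j') (snd j')) *
      (if fst j = fst j' then OU_cov \<kappa> (?s (snd j)) (?s (snd j')) else 0)) / 2))"
    by (rule OU_process_exp_moment[OF OU]) (use h in auto)
  also have "(\<Sum>j\<in>?J. \<Sum>j'\<in>?J. c * z (fst j) (snd j) * (c * z (fst j') (snd j')) *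
        (if fst j = fst j' then OU_cov \<kappa> (?s (snd j)) (?s (snd j')) else 0))
      = (\<Sum>i\<in>UNIV. \<Sum>k<m. \<Sum>k'<m. c * z i k * (c * z i k') * OU_cov \<kappa> (?s k) (?s k'))"
    by (rule sum_block_diagonal_quadratic_form) simp
  also have "\<dots> = (\<Sum>i\<in>UNIV. c\<^sup>2 * (\<Sum>k<m. \<Sum>k'<m. z i k * z i k' * OU_cov \<kappa> (?s k) (?s k')))"
    by (simp add: sum_distrib_left power2_eq_square mult_ac)
  also have "\<dots> = (\<Sum>i\<in>UNIV. c\<^sup>2 * ((1 - \<rho>\<^sup>2) / (2 * \<kappa>) * (\<Sum>r<m. (ar_process \<rho> (z i) r)\<^sup>2)))"
    unfolding \<rho>_def OU_cov_grid_quadratic_form[OF \<kappa> h] ..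
  also have "\<dots> = 2 * (c\<^sup>2 / 2 * ((1 - \<rho>\<^sup>2) / (2 * \<kappa>)) * (\<Sum>i\<in>UNIV. \<Sum>r<m. (ar_process \<rho> (z i) r)\<^sup>2))"
    by (simp add: sum_distrib_left[symmetric] sum_divide_distrib[symmetric])
  finally show ?thesis
    by simp
qed

lemma OU_grid_exp_quadratic:
  fixes B :: "'a \<Rightarrow> real \<Rightarrow> real ^ 'n" and \<kappa> h \<beta> :: real
  assumes OU: "OU_process M \<kappa> B" and \<kappa>: "\<kappa> > 0" and h: "h > 0" and \<beta>: "\<beta> \<ge> 0"
  defines "\<rho> \<equiv> exp (- \<kappa> * h)"
  shows "(\<integral>\<^sup>+\<omega>. ennreal (exp (\<beta> * (\<Sum>i\<in>UNIV. \<Sum>k<m. (B \<omega> (real (m - k) * h) $ i)\<^sup>2))) \<partial>M)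
    = (\<integral>\<^sup>+w. ennreal (exp (\<beta> * ((1 - \<rho>\<^sup>2) / (2 * \<kappa>)) * (\<Sum>r<m. (ar_process \<rho> w r)\<^sup>2)))
        \<partial>std_normal_iid {..<m}) ^ CARD('n)"
proof -
  define c where "c = sqrt (2 * \<beta>)"
  have c: "c\<^sup>2 / 2 = \<beta>" using \<beta> by (simp add: c_def)
  let ?\<beta>' = "\<beta> * ((1 - \<rho>\<^sup>2) / (2 * \<kappa>))"
  let ?Z = "PiM UNIV (\<lambda>_::'n. std_normal_iid {..<m})"
  interpret M: prob_space M by (rule OU_process_prob_space[OF OU])
  have "(\<integral>\<^sup>+\<omega>. ennreal (exp (\<beta> * (\<Sum>i\<in>UNIV. \<Sum>k<m. (B \<omega> (real (m - k) * h) $ i)\<^sup>2))) \<partial>M)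
      = (\<integral>\<^sup>+z. (\<integral>\<^sup>+\<omega>. ennreal (exp (\<Sum>i\<in>UNIV. \<Sum>k<m. c * z i k * (B \<omega> (real (m - k) * h) $ i))) \<partial>M) \<partial>?Z)"
    unfolding c[symmetric] using OU_process_measurable[OF OU] h
    by (intro nn_integral_exp_sum_squares_Hubbard_Stratonovich M.sigma_finite_measure_axioms) auto
  also have "\<dots> = (\<integral>\<^sup>+z. (\<Prod>i\<in>UNIV. ennreal (exp (?\<beta>' * (\<Sum>r<m. (ar_process \<rho> (z i) r)\<^sup>2)))) \<partial>?Z)"
    unfolding OU_grid_exp_moment[OF OU \<kappa> h] c \<rho>_def[symmetric]
    by (simp add: sum_distrib_left exp_sum prod_ennreal prod_nonneg)
  also have "\<dots> = (\<Prod>i\<in>(UNIV :: 'n set). \<integral>\<^sup>+w. ennreal (exp (?\<beta>' * (\<Sum>r<m. (ar_process \<rho> w r)\<^sup>2)))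
      \<partial>std_normal_iid {..<m})"
    by (rule product_sigma_finite.product_nn_integral_prod[OF product_sigma_finite_std_normal(2)]) auto
  finally show ?thesis
    by (simp add: mult.assoc)
qed

lemma OU_grid_exp_norm_sum_le:
  fixes B :: "'a \<Rightarrow> real \<Rightarrow> real ^ 'n" and \<kappa> a b b\<^sub>1 h :: real
  assumes OU: "OU_process M \<kappa> B" and \<kappa>: "\<kappa> > 0" and a: "a > 0" and b: "b > 0" and h: "h > 0"
    and ah: "a * h \<le> b" and small: "4 * \<kappa> * b\<^sup>2 * h \<le> 2 * b * (\<kappa> - b) - a"
    and b\<^sub>1: "2 * h * b * b\<^sub>1 \<le> b\<^sub>1 - b" and hb: "2 * h * b < 1"
  shows "(\<integral>\<^sup>+\<omega>. ennreal (exp (h * (\<Sum>k<m. norm (B \<omega> (real (m - k) * h))))) \<partial>M)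
    \<le> ennreal (exp (real m * h * (1 / (4 * a) + real CARD('n) * b\<^sub>1)))"
proof -
  let ?Q = "\<lambda>\<omega>. \<Sum>i\<in>UNIV. \<Sum>k<m. (B \<omega> (real (m - k) * h) $ i)\<^sup>2"
  have pointwise: "h * (\<Sum>k<m. norm (B \<omega> (real (m - k) * h))) \<le> real m * h / (4 * a) + a * h * ?Q \<omega>" for \<omega>
  proof -
    have "h * (\<Sum>k<m. norm (B \<omega> (real (m - k) * h)))
        \<le> h * (\<Sum>k<m. a * (norm (B \<omega> (real (m - k) * h)))\<^sup>2 + 1 / (4 * a))"
      using h abs_le_square_plus[OF a] by (intro mult_left_mono sum_mono) (metis abs_norm_cancel, simp)
    also have "\<dots> = real m * h / (4 * a) + a * h * ?Q \<omega>"
      by (simp add: power2_norm_vec_eq_sum sum.swap[of _ UNIV] sum.distrib sum_distrib_left algebra_simps)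
    finally show ?thesis .
  qed
  have "(\<integral>\<^sup>+\<omega>. ennreal (exp (h * (\<Sum>k<m. norm (B \<omega> (real (m - k) * h))))) \<partial>M)
      \<le> (\<integral>\<^sup>+\<omega>. ennreal (exp (real m * h / (4 * a))) * ennreal (exp (a * h * ?Q \<omega>)) \<partial>M)"
    using pointwise by (intro nn_integral_mono) (simp add: exp_add[symmetric] ennreal_mult'[symmetric])
  also have "\<dots> = ennreal (exp (real m * h / (4 * a))) * (\<integral>\<^sup>+\<omega>. ennreal (exp (a * h * ?Q \<omega>)) \<partial>M)"
    using h by (intro nn_integral_cmult measurable_compose[OF _ measurable_ennreal]
        measurable_compose[OF _ borel_measurable_exp] borel_measurable_times borel_measurable_const
        borel_measurable_sum borel_measurable_power OU_process_measurable[OF OU]) auto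
  also have "(\<integral>\<^sup>+\<omega>. ennreal (exp (a * h * ?Q \<omega>)) \<partial>M)
      = (\<integral>\<^sup>+w. ennreal (exp (a * h * ((1 - (exp (- \<kappa> * h))\<^sup>2) / (2 * \<kappa>))
          * (\<Sum>r<m. (ar_process (exp (- \<kappa> * h)) w r)\<^sup>2))) \<partial>std_normal_iid {..<m}) ^ CARD('n)"
    using a h by (intro OU_grid_exp_quadratic[OF OU \<kappa> h]) simp
  also have "\<dots> \<le> (ennreal (exp (h * b\<^sub>1)) ^ m) ^ CARD('n)"
    by (intro power_mono nn_integral_ar_process_grid_le[OF \<kappa> a b h ah small b\<^sub>1 hb]) simp
  also have "ennreal (exp (real m * h / (4 * a))) * (ennreal (exp (h * b\<^sub>1)) ^ m) ^ CARD('n)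
      = ennreal (exp (real m * h * (1 / (4 * a) + real CARD('n) * b\<^sub>1)))"
  proof -
    have "exp (h * b\<^sub>1) ^ (m * CARD('n)) = exp (real (m * CARD('n)) * (h * b\<^sub>1))"
      by (rule exp_of_nat_mult[symmetric])
    then have "(ennreal (exp (h * b\<^sub>1)) ^ m) ^ CARD('n) = ennreal (exp (real (m * CARD('n)) * (h * b\<^sub>1)))"
      by (simp add: ennreal_power power_mult)
    then show ?thesis
      by (simp add: ennreal_mult'[symmetric] exp_add[symmetric] algebra_simps)
  qed
  finally show ?thesis
    by (simp add: mult_left_mono)
qed

lemma OU_grid_exp_norm_sum_eventually_le:
  fixes B :: "'a \<Rightarrow> real \<Rightarrow> real ^ 'n" and \<kappa> a b b\<^sub>1 :: real
  assumes OU: "OU_process M \<kappa> B" and \<kappa>: "\<kappa> > 0" and a: "a > 0" and b: "b > 0"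
    and b\<^sub>1: "b < b\<^sub>1" and ab: "a < 2 * b * (\<kappa> - b)"
  shows "\<forall>\<^sub>F h in at_right 0. \<forall>m.
    (\<integral>\<^sup>+\<omega>. ennreal (exp (h * (\<Sum>k<m. norm (B \<omega> (real (m - k) * h))))) \<partial>M)
      \<le> ennreal (exp (real m * h * (1 / (4 * a) + real CARD('n) * b\<^sub>1)))"
proof -
  have "\<forall>\<^sub>F h in at_right 0. 0 < h \<and> a * h < b \<and> (4 * \<kappa> * b\<^sup>2) * h < 2 * b * (\<kappa> - b) - a
      \<and> (2 * b * b\<^sub>1) * h < b\<^sub>1 - b \<and> (2 * b) * h < 1"
    using b b\<^sub>1 ab by (intro eventually_conj eventually_at_right_less eventually_at_right_0_mult_less) auto
  then show ?thesis
  proof eventually_elim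
    case (elim h)
    then show ?case
      by (intro allI OU_grid_exp_norm_sum_le[OF OU \<kappa> a b]) (auto simp: mult_ac)
  qed
qed

lemma OU_riemann_sum_norm_tendsto:
  fixes B :: "'a \<Rightarrow> real \<Rightarrow> real ^ 'n"
  assumes OU: "OU_process M \<kappa> B" and \<omega>: "\<omega> \<in> space M" and t: "t > 0"
  shows "(\<lambda>m. t / real m * (\<Sum>k<m. norm (B \<omega> (real (m - k) * (t / real m)))))
    \<longlonglongrightarrow> integral {0..t} (\<lambda>s. norm (B \<omega> s))"
proof -
  have "continuous_on {0..t} (B \<omega>)"
    using OU_process_continuous[OF OU \<omega>] by (rule continuous_on_subset) auto
  then have "(\<lambda>m. t / real m * (\<Sum>j<m. norm (B \<omega> (real (Suc j) * (t / real m)))))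
      \<longlonglongrightarrow> integral {0..t} (\<lambda>s. norm (B \<omega> s))"
    using t by (intro riemann_sum_right_tendsto continuous_on_norm)
  moreover have reverse: "(\<Sum>k<m. g (m - k)) = (\<Sum>j<m. g (Suc j))" for m and g :: "nat \<Rightarrow> real"
  proof -
    have "(\<Sum>k<m. g (m - k)) = (\<Sum>k<m. g (Suc (m - Suc k)))"
      by (intro sum.cong) (auto simp: Suc_diff_Suc)
    also have "\<dots> = (\<Sum>j<m. g (Suc j))"
      by (rule sum.nat_diff_reindex)
    finally show ?thesis .
  qed
  moreover have "(\<Sum>k<m. norm (B \<omega> (real (m - k) * (t / real m))))
      = (\<Sum>j<m. norm (B \<omega> (real (Suc j) * (t / real m))))" for m
    using reverse[where m = m and g = "\<lambda>i. norm (B \<omega> (real i * (t / real m)))"] by simp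
  ultimately show ?thesis
    by simp
qed

lemma OU_integral_norm_measurable:
  fixes B :: "'a \<Rightarrow> real \<Rightarrow> real ^ 'n"
  assumes OU: "OU_process M \<kappa> B" and t: "t > 0"
  shows "(\<lambda>\<omega>. integral {0..t} (\<lambda>s. norm (B \<omega> s))) \<in> borel_measurable M"
  using t by (intro borel_measurable_LIMSEQ_real[OF OU_riemann_sum_norm_tendsto[OF OU]]
      borel_measurable_times borel_measurable_const borel_measurable_sum OU_norm_measurable[OF OU]) auto

lemma OU_exp_integral_norm_le:
  fixes B :: "'a \<Rightarrow> real \<Rightarrow> real ^ 'n" and \<kappa> t a b b\<^sub>1 :: real
  assumes OU: "OU_process M \<kappa> B" and \<kappa>: "\<kappa> > 0" and t: "t > 0" and a: "a > 0" and b: "b > 0"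
    and b\<^sub>1: "b < b\<^sub>1" and ab: "a < 2 * b * (\<kappa> - b)"
  shows "(\<integral>\<^sup>+\<omega>. ennreal (exp (integral {0..t} (\<lambda>s. norm (B \<omega> s)))) \<partial>M)
    \<le> ennreal (exp (t * (1 / (4 * a) + real CARD('n) * b\<^sub>1)))"
proof (rule nn_integral_le_of_tendsto)
  let ?R = "\<lambda>m \<omega>. t / real m * (\<Sum>k<m. norm (B \<omega> (real (m - k) * (t / real m))))"
  show "(\<lambda>\<omega>. ennreal (exp (?R m \<omega>))) \<in> borel_measurable M" for m
    using t by (intro measurable_compose[OF _ measurable_ennreal] measurable_compose[OF _ borel_measurable_exp]
        borel_measurable_times borel_measurable_const borel_measurable_sum OU_norm_measurable[OF OU]) auto
  show "(\<lambda>m. ennreal (exp (?R m \<omega>))) \<longlonglongrightarrow> ennreal (exp (integral {0..t} (\<lambda>s. norm (B \<omega> s))))"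
    if "\<omega> \<in> space M" for \<omega>
    by (intro tendsto_intros OU_riemann_sum_norm_tendsto[OF OU that t])
  have "\<forall>\<^sub>F m in sequentially. \<forall>n.
      (\<integral>\<^sup>+\<omega>. ennreal (exp (t / real m * (\<Sum>k<n. norm (B \<omega> (real (n - k) * (t / real m)))))) \<partial>M)
      \<le> ennreal (exp (real n * (t / real m) * (1 / (4 * a) + real CARD('n) * b\<^sub>1)))"
    by (rule eventually_compose_filterlim[OF OU_grid_exp_norm_sum_eventually_le[OF OU \<kappa> a b b\<^sub>1 ab]
          filterlim_divide_real_of_nat_at_right_0[OF t]])
  then show "\<forall>\<^sub>F m in sequentially. (\<integral>\<^sup>+\<omega>. ennreal (exp (?R m \<omega>)) \<partial>M)
      \<le> ennreal (exp (t * (1 / (4 * a) + real CARD('n) * b\<^sub>1)))"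
    using eventually_gt_at_top[of 0]
  proof eventually_elim
    case (elim m)
    then have "real m * (t / real m) = t"
      by simp
    then show ?case
      using spec[OF elim(1), of m] by simp
  qed
qed

lemma OU_tail_bound:
  fixes B :: "'a \<Rightarrow> real \<Rightarrow> real ^ 'n" and \<kappa> N t a b b\<^sub>1 :: real
  assumes OU: "OU_process M \<kappa> B" and \<kappa>: "\<kappa> > 0" and t: "t > 0" and a: "a > 0" and b: "b > 0"
    and b\<^sub>1: "b < b\<^sub>1" and ab: "a < 2 * b * (\<kappa> - b)"
  shows "measure M {\<omega> \<in> space M. (1 / t) * integral {0..t} (\<lambda>s. norm (B \<omega> s)) > N}
    \<le> exp (t * (1 / (4 * a) + real CARD('n) * b\<^sub>1 - N))"
proof -
  interpret prob_space M
    by (rule OU_process_prob_space[OF OU])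
  define I where "I \<omega> = integral {0..t} (\<lambda>s. norm (B \<omega> s))" for \<omega>
  let ?A = "{\<omega> \<in> space M. (1 / t) * I \<omega> > N}"
  have "I \<in> borel_measurable M"
    unfolding I_def by (rule OU_integral_norm_measurable[OF OU t])
  then have A: "?A \<in> sets M"
    by measurable
  have indicator_le: "indicator ?A \<omega> \<le> ennreal (exp (- N * t)) * ennreal (exp (I \<omega>))" for \<omega>
  proof (cases "\<omega> \<in> ?A")
    case True
    then have "N * t < I \<omega>"
      using t by (simp add: field_simps)
    then have "1 \<le> exp (- N * t) * exp (I \<omega>)"
      by (simp add: exp_add[symmetric])
    then show ?thesis
      using True by (simp add: ennreal_mult'[symmetric])
  qed simp
  have "emeasure M ?A = (\<integral>\<^sup>+\<omega>. indicator ?A \<omega> \<partial>M)"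
    using A by simp
  also have "\<dots> \<le> (\<integral>\<^sup>+\<omega>. ennreal (exp (- N * t)) * ennreal (exp (I \<omega>)) \<partial>M)"
    by (intro nn_integral_mono indicator_le)
  also have "\<dots> = ennreal (exp (- N * t)) * (\<integral>\<^sup>+\<omega>. ennreal (exp (I \<omega>)) \<partial>M)"
    using \<open>I \<in> borel_measurable M\<close> by (intro nn_integral_cmult) measurable
  also have "\<dots> \<le> ennreal (exp (- N * t)) * ennreal (exp (t * (1 / (4 * a) + real CARD('n) * b\<^sub>1)))"
    unfolding I_def by (intro mult_left_mono OU_exp_integral_norm_le[OF OU \<kappa> t a b b\<^sub>1 ab]) simp
  also have "\<dots> = ennreal (exp (t * (1 / (4 * a) + real CARD('n) * b\<^sub>1 - N)))"
    by (simp add: ennreal_mult'[symmetric] exp_add[symmetric] algebra_simps)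
  finally show ?thesis
    by (simp add: I_def emeasure_eq_measure)
qed

text \<open>The witnesses \<open>a = \<kappa>\<^sup>2 / 2 - 3 d\<^sup>2\<close>, \<open>b = \<kappa> / 2 - d\<close>, \<open>b\<^sub>1 = \<kappa> / 2 - d / 2\<close> approach the optimal
  values; the loss \<open>1 / (4 a) - 1 / (2 \<kappa>\<^sup>2) = O(d\<^sup>2)\<close> is absorbed by the gain \<open>L d / 2\<close> once \<open>d\<close> is
  small.\<close>

lemma OU_tail_exponent_parameters:
  fixes \<kappa> :: real and L :: nat
  assumes \<kappa>: "\<kappa> > 0" and L: "L \<ge> 1"
  obtains a b b\<^sub>1 where "a > 0" "b > 0" "b < b\<^sub>1" "a < 2 * b * (\<kappa> - b)"
    "1 / (4 * a) + real L * b\<^sub>1 \<le> 1 / (2 * \<kappa>\<^sup>2) + real L / 2 * \<kappa>"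
proof
  define d where "d = min (\<kappa> / 4) (\<kappa> ^ 4 / 12)"
  have d: "d > 0" "d \<le> \<kappa> / 4" "d \<le> \<kappa> ^ 4 / 12"
    using \<kappa> by (auto simp: d_def)
  define a where "a = \<kappa>\<^sup>2 / 2 - 3 * d\<^sup>2"
  have "d\<^sup>2 \<le> \<kappa>\<^sup>2 / 16"
    using power_mono[of d "\<kappa> / 4" 2] d by (simp add: power_divide)
  moreover have "0 \<le> d\<^sup>2"
    by simp
  ultimately have a: "\<kappa>\<^sup>2 / 4 \<le> a"
    unfolding a_def by linarith
  moreover have "0 < \<kappa>\<^sup>2 / 4"
    using \<kappa> by simp
  ultimately have a_pos: "a > 0"
    by linarith
  then show "a > 0" .
  show "\<kappa> / 2 - d > 0" "\<kappa> / 2 - d < \<kappa> / 2 - d / 2"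
    using d \<kappa> by auto
  show "a < 2 * (\<kappa> / 2 - d) * (\<kappa> - (\<kappa> / 2 - d))"
    using d by (simp add: a_def power2_eq_square algebra_simps)
  have "1 / (4 * a) - 1 / (2 * \<kappa>\<^sup>2) = (2 * \<kappa>\<^sup>2 - 4 * a) / (8 * a * \<kappa>\<^sup>2)"
    using a_pos \<kappa> by (simp add: field_simps)
  also have "2 * \<kappa>\<^sup>2 - 4 * a = 12 * d\<^sup>2"
    by (simp add: a_def)
  also have "12 * d\<^sup>2 / (8 * a * \<kappa>\<^sup>2) \<le> 12 * d\<^sup>2 / (8 * (\<kappa>\<^sup>2 / 4) * \<kappa>\<^sup>2)"
    using a a_pos \<kappa> by (intro divide_left_mono mult_right_mono mult_left_mono mult_pos_pos) auto
  also have "\<dots> = 6 * d\<^sup>2 / \<kappa> ^ 4"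
    using \<kappa> by (simp add: power2_eq_square power4_eq_xxxx)
  also have "\<dots> \<le> d / 2"
  proof -
    have "6 * d\<^sup>2 \<le> d / 2 * \<kappa> ^ 4"
      using mult_left_mono[OF d(3), of "6 * d"] d by (simp add: power2_eq_square)
    then show ?thesis
      using \<kappa> by (simp add: pos_divide_le_eq)
  qed
  also have "\<dots> \<le> real L * (d / 2)"
    using L d by simp
  finally have "1 / (4 * a) - 1 / (2 * \<kappa>\<^sup>2) \<le> real L * (d / 2)" .
  moreover have "real L * (\<kappa> / 2 - d / 2) = real L / 2 * \<kappa> - real L * (d / 2)"
    by (simp add: right_diff_distrib)
  ultimately show "1 / (4 * a) + real L * (\<kappa> / 2 - d / 2) \<le> 1 / (2 * \<kappa>\<^sup>2) + real L / 2 * \<kappa>"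
    by linarith
qed

theorem mainTheorem6:
  fixes M :: "'a measure" and \<kappa> N :: real and B :: "'a \<Rightarrow> real \<Rightarrow> real ^ 'n"
  assumes "\<kappa> > 0" and "N > 0" and "OU_process M \<kappa> B"
  shows "Limsup at_top (\<lambda>t::real. elog (measure M {\<omega> \<in> space M.
            (1 / t) * integral {0..t} (\<lambda>s. norm (B \<omega> s)) > N}) / ereal t)
         \<le> ereal (- N + 1 / (2 * \<kappa>\<^sup>2) + real CARD('n) / 2 * \<kappa>)"
proof -
  obtain a b b\<^sub>1 where a: "a > 0" and b: "b > 0" "b < b\<^sub>1" "a < 2 * b * (\<kappa> - b)"
    and exponent: "1 / (4 * a) + real CARD('n) * b\<^sub>1 \<le> 1 / (2 * \<kappa>\<^sup>2) + real CARD('n) / 2 * \<kappa>"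
    using OU_tail_exponent_parameters[OF \<open>\<kappa> > 0\<close>, of "CARD('n)"] by (auto simp: Suc_le_eq)
  show ?thesis
  proof (rule Limsup_bounded)
    show "\<forall>\<^sub>F t in at_top. elog (measure M {\<omega> \<in> space M.
        (1 / t) * integral {0..t} (\<lambda>s. norm (B \<omega> s)) > N}) / ereal t
      \<le> ereal (- N + 1 / (2 * \<kappa>\<^sup>2) + real CARD('n) / 2 * \<kappa>)"
      using eventually_gt_at_top[of 0]
    proof eventually_elim
      case (elim t)
      have "elog (measure M {\<omega> \<in> space M. (1 / t) * integral {0..t} (\<lambda>s. norm (B \<omega> s)) > N}) / ereal t
          \<le> ereal (1 / (4 * a) + real CARD('n) * b\<^sub>1 - N)"
        by (rule elog_divide_le[OF elim OU_tail_bound[OF assms(3,1) elim a b]])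
      also have "\<dots> \<le> ereal (- N + 1 / (2 * \<kappa>\<^sup>2) + real CARD('n) / 2 * \<kappa>)"
        using exponent by simp
      finally show ?case .
    qed
  qed
qed

end
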